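(* In the setting described in the context, writing $\alpha_V,\alpha_A,\boldsymbol\Delta_V,\boldsymbol\Delta_A,\mathbf{h}_{\mathbf{V}}=\mathbf{h}_{\mathbf{V},\tau},\mathbf{h}_{\mathbf{A}}=\mathbf{h}_{\mathbf{A},\tau}$ for quantities at time $\tau$, and $c_A=1-\eta_AK_P\alpha_V^2-\eta_A\|\boldsymbol\Delta_V\|_\mu^2$, $c_V=1-\eta_V(\alpha_A^2K_Q+1/T)-\eta_V\|\boldsymbol\Delta_A\|_\mu^2$, $$\|\boldsymbol\Delta_{\mathbf{A},\tau+1}\|_\mu^2=c_A^2\|\boldsymbol\Delta_{\mathbf{A}}\|_\mu^2-2\eta_Ac_A\langle\boldsymbol\Delta_{\mathbf{A}},\mathbf{h}_{\mathbf{A}}\rangle_\mu-\frac{\eta_A^2}{K_Q}\langle\mathbf{h}_{\mathbf{A}},\mathbf{Q}\rangle_\mu^2+\eta_A^2\|\mathbf{h}_{\mathbf{A}}\|_\mu^2,$$ $$\|\boldsymbol\Delta_{\mathbf{V},\tau+1}\|_\mu^2=c_V^2\|\boldsymbol\Delta_{\mathbf{V}}\|_\mu^2-2\eta_Vc_V\langle\boldsymbol\Delta_{\mathbf{V}},\mathbf{h}_{\mathbf{V}}\rangle_\mu-\frac{\eta_V^2}{K_P}\langle\mathbf{P},\mathbf{h}_{\mathbf{V}}\rangle_\mu^2+\eta_V^2\|\mathbf{h}_{\mathbf{V}}\|_\mu^2.$$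
   Context: $\boldsymbol\mu\in\mathbb{R}^N$ is a probability vector with positive entries; $\mathbf{P}\in\mathbb{R}^{N\times N}$ has nonnegative entries, columns summing to $1$, $\mathbf{P}\boldsymbol\mu=\boldsymbol\mu$; $\mathbf{Q}=(\mathbf{q}^{(1)},\dots,\mathbf{q}^{(N)})\in\mathbb{R}^{T\times N}$ has probability-vector columns. Data: $x_1,\dots,x_{T+1}$ i.i.d. with law $\boldsymbol\mu$, $x_o$ with $\Pr(x_o=n\mid x_{T+1}=k,x_1,\dots,x_T)=\sum_tq^{(k)}_tP_{n,x_t}$; $\mathbf{X}=(\mathbf{e}_{x_1},\dots,\mathbf{e}_{x_T})$; loss $l=\frac12\|\mathbf{e}_{x_o}-\mathbf{V}\mathbf{X}\mathbf{A}\mathbf{e}_{x_{T+1}}\|^2$. Preconditioned gradients: $\hat\nabla_{\mathbf{V}}l=(\mathbf{I}_N-\mathbf{1}\mathbf{1}^\top/N)(\nabla_{\mathbf{V}}l)\operatorname{diag}(1/\boldsymbol\mu)(\mathbf{I}_N-\boldsymbol\mu\boldsymbol\mu^\top/\|\boldsymbol\mu\|^2)$; $\hat\nabla_{\mathbf{A}}l$ has columns $\frac1{\mu_k}(\mathbf{I}_T-\mathbf{1}\mathbf{1}^\top/T)\nabla_{\mathbf{a}^{(k)}}l$. The iterate $(\mathbf{V}_\tau,\mathbf{A}_\tau)$ satisfies $\mathbf{1}^\top\mathbf{V}_\tau=\mathbf{1}^\top$, $\mathbf{1}^\top\mathbf{A}_\tau=\mathbf{1}^\top$, $\mathbf{V}_\tau\boldsymbol\mu=\boldsymbol\mu$,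 and $\mathbf{V}_{\tau+1}=\mathbf{V}_\tau-\eta_V(\mathbb{E}\hat\nabla_{\mathbf{V}}l+\mathbf{h}_{\mathbf{V},\tau})$, $\mathbf{A}_{\tau+1}=\mathbf{A}_\tau-\eta_A(\mathbb{E}\hat\nabla_{\mathbf{A}}l+\mathbf{h}_{\mathbf{A},\tau})$, where expectations are over the data at parameters $(\mathbf{V}_\tau,\mathbf{A}_\tau)$, and $\mathbf{h}_{\mathbf{V},\tau}=\hat\nabla^{(B)}_{\mathbf{V}}l-\mathbb{E}\hat\nabla_{\mathbf{V}}l$, $\mathbf{h}_{\mathbf{A},\tau}=\hat\nabla^{(B)}_{\mathbf{A}}l-\mathbb{E}\hat\nabla_{\mathbf{A}}l$ with $\hat\nabla^{(B)}$ the average of preconditioned per-sample gradients over $B$ fresh samples. $\langle\mathbf{M},\mathbf{M}'\rangle_\mu=\operatorname{Tr}(\mathbf{M}\operatorname{diag}(\boldsymbol\mu)\mathbf{M}'^\top)$, $\|\mathbf{M}\|_\mu^2=\langle\mathbf{M},\mathbf{M}\rangle_\mu$. $K_P=\|\mathbf{P}\|_\mu^2-\|\boldsymbol\mu\|^2>0$, $K_Q=\|\mathbf{Q}\|_\mu^2-1/T>0$; for any iterate, $\alpha_V=(\langle\mathbf{V},\mathbf{P}\rangle_\mu-\|\boldsymbol\mu\|^2)/K_P$, $\alpha_A=(\langle\mathbf{A},\mathbf{Q}\rangle_\mu-1/T)/K_Q$, $\boldsymbol\Delta_{\mathbf{V}}=\mathbf{V}-\alpha_V\mathbf{P}-(1-\alpha_V)\boldsymbol\mu\mathbf{1}^\top$,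 $\boldsymbol\Delta_{\mathbf{A}}=\mathbf{A}-\alpha_A\mathbf{Q}-(1-\alpha_A)\mathbf{1}\mathbf{1}^\top/T$; the subscript $\tau+1$ denotes these quantities at $(\mathbf{V}_{\tau+1},\mathbf{A}_{\tau+1})$. *)

theory Defs
  imports "HOL-Analysis.Analysis"
begin

text \<open>Index types: 'n (the N tokens) and 't (the T positions), both finite.
  Matrices are vec-of-vec: M $ i $ j is the (i,j) entry (row i, column j).
  P, V :: N x N;  Q, A :: T x N;  X :: N x T.\<close>

definition diag_vec :: "real^'n \<Rightarrow> real^'n^'n" where
  "diag_vec v = (\<chi> i j. if i = j then v $ i else 0)"

definition mu_inner :: "real^'n \<Rightarrow> real^'n^'r \<Rightarrow> real^'n^'r \<Rightarrow> real" where
  "mu_inner mu M M' = trace (M ** diag_vec mu ** transpose M')"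

definition mu_norm2 :: "real^'n \<Rightarrow> real^'n^'r \<Rightarrow> real" where
  "mu_norm2 mu M = mu_inner mu M M"

definition ones :: "real^'a" where "ones = (\<chi> i. 1)"

definition outer :: "real^'a \<Rightarrow> real^'b \<Rightarrow> real^'b^'a" where
  "outer u w = (\<chi> i j. u $ i * w $ j)"

definition grad :: "('a::real_inner \<Rightarrow> real) \<Rightarrow> 'a \<Rightarrow> 'a" where
  "grad f x = (THE D. GDERIV f x :> D)"

text \<open>A data sample: (x_1..x_T, x_{T+1}, x_o).\<close>
type_synonym ('n,'t) sample = "('t \<Rightarrow> 'n) \<times> 'n \<times> 'n"

definition Xmat :: "('t \<Rightarrow> 'n) \<Rightarrow> real^'t^'n" where
  "Xmat xs = (\<chi> n t. if xs t = n then 1 else 0)"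

definition loss :: "real^'n^'n \<Rightarrow> real^'n^'t \<Rightarrow> ('n,'t) sample \<Rightarrow> real" where
  "loss V A s = (case s of (xs, k, xo) \<Rightarrow>
      (1/2) * (norm (axis xo 1 - (V ** Xmat xs ** A) *v axis k 1))\<^sup>2)"

text \<open>Probability of a sample: x_1..x_{T+1} iid mu, and
  Pr(x_o = n | x_{T+1} = k, x_1..x_T) = sum_t q^(k)_t P_{n,x_t}.\<close>
definition sample_prob :: "real^'n \<Rightarrow> real^'n^'n \<Rightarrow> real^'n^'t \<Rightarrow> ('n,'t) sample \<Rightarrow> real" where
  "sample_prob mu P Q s = (case s of (xs, k, xo) \<Rightarrow>
      (\<Prod>t\<in>UNIV. mu $ xs t) * mu $ k * (\<Sum>t\<in>UNIV. Q $ t $ k * P $ xo $ xs t))"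

definition pgradV :: "real^'n \<Rightarrow> real^'n^'n \<Rightarrow> real^'n^'t \<Rightarrow> ('n,'t) sample \<Rightarrow> real^'n^'n" where
  "pgradV mu V A s =
     (mat 1 - (1 / real CARD('n)) *\<^sub>R outer ones ones)
     ** grad (\<lambda>V'. loss V' A s) V
     ** diag_vec (\<chi> i. 1 / mu $ i)
     ** (mat 1 - (1 / (mu \<bullet> mu)) *\<^sub>R outer mu mu)"

definition pgradA :: "real^'n \<Rightarrow> real^'n^'n \<Rightarrow> real^'n^'t \<Rightarrow> ('n,'t) sample \<Rightarrow> real^'n^'t" where
  "pgradA mu V A s =
     (\<chi> t k. ((1 / mu $ k) *\<^sub>R ((mat 1 - (1 / real CARD('t)) *\<^sub>R outer ones ones)
                 *v column k (grad (\<lambda>A'. loss V A' s) A))) $ t)"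

definition EpgradV :: "real^'n \<Rightarrow> real^'n^'n \<Rightarrow> real^'n^'t \<Rightarrow> real^'n^'n \<Rightarrow> real^'n^'t \<Rightarrow> real^'n^'n" where
  "EpgradV mu P Q V A = (\<Sum>s\<in>UNIV. sample_prob mu P Q s *\<^sub>R pgradV mu V A s)"

definition EpgradA :: "real^'n \<Rightarrow> real^'n^'n \<Rightarrow> real^'n^'t \<Rightarrow> real^'n^'n \<Rightarrow> real^'n^'t \<Rightarrow> real^'n^'t" where
  "EpgradA mu P Q V A = (\<Sum>s\<in>UNIV. sample_prob mu P Q s *\<^sub>R pgradA mu V A s)"

definition BpgradV :: "real^'n \<Rightarrow> nat \<Rightarrow> (nat \<Rightarrow> ('n,'t) sample) \<Rightarrow> real^'n^'n \<Rightarrow> real^'n^'t \<Rightarrow> real^'n^'n" where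
  "BpgradV mu B smp V A = (1 / real B) *\<^sub>R (\<Sum>i<B. pgradV mu V A (smp i))"

definition BpgradA :: "real^'n \<Rightarrow> nat \<Rightarrow> (nat \<Rightarrow> ('n,'t) sample) \<Rightarrow> real^'n^'n \<Rightarrow> real^'n^'t \<Rightarrow> real^'n^'t" where
  "BpgradA mu B smp V A = (1 / real B) *\<^sub>R (\<Sum>i<B. pgradA mu V A (smp i))"

definition K_P :: "real^'n \<Rightarrow> real^'n^'n \<Rightarrow> real" where
  "K_P mu P = mu_norm2 mu P - mu \<bullet> mu"

definition K_Q :: "real^'n \<Rightarrow> real^'n^'t \<Rightarrow> real" where
  "K_Q mu Q = mu_norm2 mu Q - 1 / real CARD('t)"

definition alpha_V :: "real^'n \<Rightarrow> real^'n^'n \<Rightarrow> real^'n^'n \<Rightarrow> real" where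
  "alpha_V mu P V = (mu_inner mu V P - mu \<bullet> mu) / K_P mu P"

definition alpha_A :: "real^'n \<Rightarrow> real^'n^'t \<Rightarrow> real^'n^'t \<Rightarrow> real" where
  "alpha_A mu Q A = (mu_inner mu A Q - 1 / real CARD('t)) / K_Q mu Q"

definition Delta_V :: "real^'n \<Rightarrow> real^'n^'n \<Rightarrow> real^'n^'n \<Rightarrow> real^'n^'n" where
  "Delta_V mu P V = V - alpha_V mu P V *\<^sub>R P - (1 - alpha_V mu P V) *\<^sub>R outer mu ones"

definition Delta_A :: "real^'n \<Rightarrow> real^'n^'t \<Rightarrow> real^'n^'t \<Rightarrow> real^'n^'t" where
  "Delta_A mu Q A = A - alpha_A mu Q A *\<^sub>R Q
      - (1 - alpha_A mu Q A) *\<^sub>R ((1 / real CARD('t)) *\<^sub>R outer ones ones)"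

end

theory Submission
  imports Defs
begin

text \<open>Under the constraints on the iterate, the expected preconditioned gradients are affine:
  E grad_V = |A|^2_mu (V - mu 1^T) - <A,Q>_mu (P - mu 1^T) and
  E grad_A = (|V|^2_mu - |mu|^2) (A - 1 1^T/T) - (<V,P>_mu - |mu|^2) (Q - 1 1^T/T).
  Both come from one computation: averaging the residual e_{x_o} - V X a over x_o replaces
  e_{x_o} by P X q, and the second moment of the i.i.d. token matrix X is explicit.
  The noise h keeps V mu = mu and 1^T A = 1^T, so after centring each update reads
  x' = x - eta (a x - b y + h) with y the centred target, and Delta is the mu-orthogonal
  residual of x against y.  In any inner product space the squared residual of x' is
  expanded directly, and the Pythagorean split |x|^2 = alpha^2 |y|^2 + |Delta|^2 turns
  1 - eta a into the coefficients c_A and c_V.\<close>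

lemma matrix_diff_ldistrib:
  "(A::real^'m::finite^'n::finite) ** (B - C) = A ** B - A ** (C::real^'k::finite^'m)"
  by (simp add: vec_eq_iff matrix_matrix_mult_def sum_subtractf algebra_simps)

lemma matrix_diff_rdistrib:
  "((A::real^'m::finite^'n::finite) - B) ** (C::real^'k::finite^'m) = A ** C - B ** C"
  by (simp add: vec_eq_iff matrix_matrix_mult_def sum_subtractf algebra_simps)

lemma matrix_add_rdistrib:
  "((A::real^'m::finite^'n::finite) + B) ** (C::real^'k::finite^'m) = A ** C + B ** C"
  by (simp add: vec_eq_iff matrix_matrix_mult_def sum.distrib algebra_simps)

lemma matrix_mul_scaleR_right:
  "(A::real^'m::finite^'n::finite) ** (c *\<^sub>R (B::real^'k::finite^'m)) = c *\<^sub>R (A ** B)"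
  by (simp add: vec_eq_iff matrix_matrix_mult_def sum_distrib_left algebra_simps)

lemma matrix_mul_scaleR_left:
  "(c *\<^sub>R (A::real^'m::finite^'n::finite)) ** (B::real^'k::finite^'m) = c *\<^sub>R (A ** B)"
  by (simp add: vec_eq_iff matrix_matrix_mult_def sum_distrib_left algebra_simps)

lemma matrix_mul_sum_scaleR_right:
  fixes L :: "real^'m::finite^'n::finite" and M :: "'s \<Rightarrow> real^'k::finite^'m"
  shows "L ** (\<Sum>s\<in>S. c s *\<^sub>R M s) = (\<Sum>s\<in>S. c s *\<^sub>R (L ** M s))"
  by (induction S rule: infinite_finite_induct)
     (simp_all add: matrix_add_ldistrib matrix_mul_scaleR_right)

lemma matrix_mul_sum_scaleR_left:
  fixes R :: "real^'m::finite^'n::finite" and M :: "'s \<Rightarrow> real^'n^'k::finite"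
  shows "(\<Sum>s\<in>S. c s *\<^sub>R M s) ** R = (\<Sum>s\<in>S. c s *\<^sub>R (M s ** R))"
  by (induction S rule: infinite_finite_induct)
     (simp_all add: matrix_add_rdistrib matrix_mul_scaleR_left)

lemma matrix_vector_mult_sum_left:
  fixes M :: "'s \<Rightarrow> real^'n::finite^'m::finite"
  shows "(\<Sum>s\<in>S. M s) *v x = (\<Sum>s\<in>S. M s *v x)"
  by (induction S rule: infinite_finite_induct) (simp_all add: matrix_vector_mult_add_rdistrib)

lemma vector_matrix_mult_sum_right:
  fixes M :: "'s \<Rightarrow> real^'n::finite^'m::finite"
  shows "x v* (\<Sum>s\<in>S. M s) = (\<Sum>s\<in>S. x v* M s)"
  by (induction S rule: infinite_finite_induct) (simp_all add: vector_matrix_mult_add_rdistrib)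

lemma matrix_mul_outer: "(M::real^'m::finite^'n::finite) ** outer u w = outer (M *v u) w"
  by (simp add: vec_eq_iff matrix_matrix_mult_def outer_def matrix_vector_mult_def
      sum_distrib_left sum_distrib_right mult_ac)

lemma outer_matrix_mul: "outer u w ** (M::real^'m::finite^'n::finite) = outer u (w v* M)"
  by (simp add: vec_eq_iff matrix_matrix_mult_def outer_def vector_matrix_mult_def
      sum_distrib_left mult_ac)

lemma outer_matrix_vector_mult:
  "outer (u::real^'a::finite) (w::real^'b::finite) *v x = (w \<bullet> x) *\<^sub>R u"
  by (simp add: vec_eq_iff outer_def matrix_vector_mult_def inner_vec_def sum_distrib_left mult_ac)

lemma vector_matrix_mult_outer:
  "x v* outer (u::real^'a::finite) (w::real^'b::finite) = (x \<bullet> u) *\<^sub>R w"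
  by (simp add: vec_eq_iff outer_def vector_matrix_mult_def inner_vec_def sum_distrib_left mult_ac)

lemma inner_matrix_vector_mult_eq_inner_outer:
  "(x::real^'a::finite) \<bullet> (H *v y) = H \<bullet> outer x (y::real^'b::finite)"
  by (simp add: inner_vec_def matrix_vector_mult_def outer_def sum_distrib_left mult_ac)

lemma ones_nth [simp]: "ones $ i = 1"
  by (simp add: ones_def)

lemma ones_inner: "(ones::real^'n::finite) \<bullet> x = (\<Sum>i\<in>UNIV. x $ i)"
  by (simp add: inner_vec_def)

lemma ones_vector_matrix_mult_nth: "(ones v* M) $ k = (\<Sum>t\<in>UNIV. M $ t $ k)"
  by (simp add: vector_matrix_mult_def)

lemma ones_vector_matrix_mult_eq_ones_iff:
  "ones v* M = ones \<longleftrightarrow> (\<forall>k. (\<Sum>t\<in>UNIV. M $ t $ k) = 1)"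
  by (simp add: vec_eq_iff ones_vector_matrix_mult_nth)

lemma ones_vector_matrix_mult_eq_0_iff:
  "ones v* M = 0 \<longleftrightarrow> (\<forall>k. (\<Sum>t\<in>UNIV. M $ t $ k) = 0)"
  by (simp add: vec_eq_iff ones_vector_matrix_mult_nth)

section \<open>Orthogonal residuals\<close>

definition orth_residual :: "'a::real_inner \<Rightarrow> 'a \<Rightarrow> 'a" where
  "orth_residual x y = x - (x \<bullet> y / (y \<bullet> y)) *\<^sub>R y"

lemma inner_orth_residual_right: "orth_residual x y \<bullet> y = 0"
  by (cases "y = 0") (simp_all add: orth_residual_def inner_diff_left)

lemma inner_eq_proj_plus_orth_residual:
  "x \<bullet> x = (x \<bullet> y / (y \<bullet> y))\<^sup>2 * (y \<bullet> y) + orth_residual x y \<bullet> orth_residual x y"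
  by (cases "y = 0")
     (simp_all add: orth_residual_def inner_diff_left inner_diff_right inner_commute
        power2_eq_square field_simps)

(* No hypothesis on y: for y = 0 the junk value x / 0 = 0 degenerates both sides alike,
   which is why the positivity of K_P and K_Q is never needed. *)
lemma orth_residual_step:
  fixes x y h :: "'a::real_inner"
  shows "orth_residual (x - \<eta> *\<^sub>R (a *\<^sub>R x - b *\<^sub>R y + h)) y
           \<bullet> orth_residual (x - \<eta> *\<^sub>R (a *\<^sub>R x - b *\<^sub>R y + h)) y
         = (1 - \<eta> * a)\<^sup>2 * (orth_residual x y \<bullet> orth_residual x y)
           - 2 * \<eta> * (1 - \<eta> * a) * (orth_residual x y \<bullet> h)
           - \<eta>\<^sup>2 / (y \<bullet> y) * (h \<bullet> y)\<^sup>2 + \<eta>\<^sup>2 * (h \<bullet> h)"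
proof -
  have step: "orth_residual (x - \<eta> *\<^sub>R (a *\<^sub>R x - b *\<^sub>R y + h)) y
      = (1 - \<eta> * a) *\<^sub>R orth_residual x y - \<eta> *\<^sub>R orth_residual h y"
    by (cases "y = 0")
       (simp_all add: orth_residual_def inner_diff_left inner_add_left algebra_simps
          diff_divide_distrib add_divide_distrib)
  have cross: "orth_residual h y \<bullet> orth_residual x y = h \<bullet> orth_residual x y"
    using inner_orth_residual_right[of x y]
    by (simp add: orth_residual_def[of h] inner_diff_left inner_diff_right inner_commute)
  have norm_h: "orth_residual h y \<bullet> orth_residual h y = h \<bullet> h - (h \<bullet> y)\<^sup>2 / (y \<bullet> y)"
    using inner_eq_proj_plus_orth_residual[of h y]
    by (cases "y = 0") (simp_all add: power2_eq_square field_simps)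
  show ?thesis
    unfolding step
    by (simp add: cross norm_h inner_diff_left inner_diff_right inner_commute power2_eq_square algebra_simps)
qed

lemma matrix_mul_diag_vec: "M ** diag_vec d = (\<chi> i j. M $ i $ j * d $ j)"
  by (simp add: vec_eq_iff matrix_matrix_mult_def diag_vec_def if_distrib cong: if_cong)

lemma mu_inner_eq_sum:
  "mu_inner mu M M' = (\<Sum>i\<in>UNIV. \<Sum>j\<in>UNIV. M $ i $ j * mu $ j * M' $ i $ j)"
  unfolding mu_inner_def trace_def matrix_mul_diag_vec
  by (simp add: matrix_matrix_mult_def transpose_def)

lemma mu_inner_commute: "mu_inner mu M M' = mu_inner mu M' M"
  by (simp add: mu_inner_eq_sum mult_ac)

lemma mu_inner_diff_left: "mu_inner mu (X - Y) Z = mu_inner mu X Z - mu_inner mu Y Z"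
  by (simp add: mu_inner_eq_sum sum_subtractf algebra_simps)

lemma mu_inner_diff_right: "mu_inner mu Z (X - Y) = mu_inner mu Z X - mu_inner mu Z Y"
  by (simp add: mu_inner_eq_sum sum_subtractf algebra_simps)

definition sqrt_weighted :: "real^'n \<Rightarrow> real^'n^'r \<Rightarrow> real^'n^'r" where
  "sqrt_weighted mu M = (\<chi> i j. sqrt (mu $ j) * M $ i $ j)"

lemma mu_inner_eq_inner_sqrt_weighted:
  assumes "\<forall>j. mu $ j \<ge> 0"
  shows "mu_inner mu M M' = sqrt_weighted mu M \<bullet> sqrt_weighted mu M'"
proof -
  have sqrt_sq: "sqrt (mu $ j) * (sqrt (mu $ j) * c) = mu $ j * c" for j c
    using assms by (simp add: mult.assoc[symmetric])
  show ?thesis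
    by (simp add: mu_inner_eq_sum sqrt_weighted_def inner_vec_def mult_ac sqrt_sq del: real_sqrt_mult_self)
qed

lemma sqrt_weighted_diff: "sqrt_weighted mu (M - M') = sqrt_weighted mu M - sqrt_weighted mu M'"
  and sqrt_weighted_add: "sqrt_weighted mu (M + M') = sqrt_weighted mu M + sqrt_weighted mu M'"
  and sqrt_weighted_scaleR: "sqrt_weighted mu (c *\<^sub>R M) = c *\<^sub>R sqrt_weighted mu M"
  by (simp_all add: sqrt_weighted_def vec_eq_iff algebra_simps)

definition mu_residual :: "real^'n \<Rightarrow> real^'n^'r \<Rightarrow> real^'n^'r \<Rightarrow> real^'n^'r" where
  "mu_residual mu X Y = X - (mu_inner mu X Y / mu_norm2 mu Y) *\<^sub>R Y"

lemma sqrt_weighted_mu_residual: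
  assumes "\<forall>j. mu $ j \<ge> 0"
  shows "sqrt_weighted mu (mu_residual mu X Y)
       = orth_residual (sqrt_weighted mu X) (sqrt_weighted mu Y)"
  by (simp add: mu_residual_def orth_residual_def mu_norm2_def sqrt_weighted_diff
      sqrt_weighted_scaleR mu_inner_eq_inner_sqrt_weighted[OF assms])

lemma mu_norm2_eq_proj_plus_mu_residual:
  assumes "\<forall>j. mu $ j \<ge> 0"
  shows "mu_norm2 mu X
       = (mu_inner mu X Y / mu_norm2 mu Y)\<^sup>2 * mu_norm2 mu Y + mu_norm2 mu (mu_residual mu X Y)"
  using inner_eq_proj_plus_orth_residual
  by (simp add: mu_norm2_def mu_inner_eq_inner_sqrt_weighted[OF assms]
      sqrt_weighted_mu_residual[OF assms])

lemma mu_norm2_mu_residual_step: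
  assumes "\<forall>j. mu $ j \<ge> 0"
  shows "mu_norm2 mu (mu_residual mu (X - \<eta> *\<^sub>R (a *\<^sub>R X - b *\<^sub>R Y + h)) Y)
       = (1 - \<eta> * a)\<^sup>2 * mu_norm2 mu (mu_residual mu X Y)
         - 2 * \<eta> * (1 - \<eta> * a) * mu_inner mu (mu_residual mu X Y) h
         - \<eta>\<^sup>2 / mu_norm2 mu Y * (mu_inner mu h Y)\<^sup>2 + \<eta>\<^sup>2 * mu_norm2 mu h"
  using orth_residual_step
  by (simp add: mu_norm2_def mu_inner_eq_inner_sqrt_weighted[OF assms]
      sqrt_weighted_mu_residual[OF assms] sqrt_weighted_diff sqrt_weighted_add sqrt_weighted_scaleR)

section \<open>Gradients of the loss\<close>

lemma grad_eqI:
  fixes f :: "'a::real_inner \<Rightarrow> real"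
  assumes "GDERIV f x :> D"
  shows "grad f x = D"
  unfolding grad_def
proof (rule the_equality)
  show "GDERIV f x :> D" by fact
  fix D' assume "GDERIV f x :> D'"
  then have "(\<lambda>h. h \<bullet> D) = (\<lambda>h. h \<bullet> D')"
    using assms unfolding gderiv_def by (metis has_derivative_unique)
  then have "(D - D') \<bullet> D = (D - D') \<bullet> D'" by metis
  then have "(D - D') \<bullet> (D - D') = 0" by (simp add: inner_diff_right)
  then show "D' = D" by simp
qed

lemma bounded_linear_matrix_vector_mult_left:
  "bounded_linear (\<lambda>Z::real^'b::finite^'a::finite. Z *v y)"
proof -
  have "linear (\<lambda>Z::real^'b^'a. Z *v y)"
    by (rule linearI)
       (simp_all add: vec_eq_iff matrix_vector_mult_def sum.distrib sum_distrib_left algebra_simps)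
  then show ?thesis by (simp add: linear_conv_bounded_linear)
qed

lemma grad_half_norm2_affine:
  fixes c :: "real^'m::finite" and M :: "real^'a::finite^'m" and y :: "real^'b::finite"
    and Z :: "real^'b^'a"
  shows "grad (\<lambda>Z. 1/2 * (norm (c - M *v (Z *v y)))\<^sup>2) Z = - outer ((c - M *v (Z *v y)) v* M) y"
proof (rule grad_eqI)
  define r where "r = (\<lambda>Z::real^'b^'a. c - M *v (Z *v y))"
  have "bounded_linear (\<lambda>Z::real^'b^'a. M *v (Z *v y))"
    using bounded_linear_compose[OF matrix_vector_mul_bounded_linear[of M]
        bounded_linear_matrix_vector_mult_left[of y]]
    by (simp add: o_def)
  then have "(r has_derivative (\<lambda>H. - (M *v (H *v y)))) (at Z)"
    unfolding r_def
    using has_derivative_diff[OF has_derivative_const bounded_linear.has_derivative[OF _ has_derivative_id]]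
    by simp
  then have "((\<lambda>Z. 1/2 * (r Z \<bullet> r Z)) has_derivative
      (\<lambda>H. 1/2 * (r Z \<bullet> (- (M *v (H *v y))) + (- (M *v (H *v y))) \<bullet> r Z))) (at Z)"
    by (intro has_derivative_mult_right has_derivative_inner)
  moreover have "1/2 * (r Z \<bullet> (- (M *v (H *v y))) + (- (M *v (H *v y))) \<bullet> r Z)
      = H \<bullet> (- outer (r Z v* M) y)" for H
    using dot_lmul_matrix[of "r Z" M "H *v y"] inner_matrix_vector_mult_eq_inner_outer[of "r Z v* M" H y]
    by (simp add: inner_commute)
  ultimately show "GDERIV (\<lambda>Z. 1/2 * (norm (c - M *v (Z *v y)))\<^sup>2) Z :> - outer ((c - M *v (Z *v y)) v* M) y"
    unfolding gderiv_def r_def by (simp add: power2_norm_eq_inner)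
qed

lemma grad_loss_V:
  "grad (\<lambda>V'. loss V' A (xs, k, xo)) V
     = - outer (axis xo 1 - V *v (Xmat xs *v column k A)) (Xmat xs *v column k A)"
proof -
  have "(\<lambda>V'. loss V' A (xs, k, xo))
      = (\<lambda>V'. 1/2 * (norm (axis xo 1 - mat 1 *v (V' *v (Xmat xs *v column k A))))\<^sup>2)"
    by (simp add: loss_def matrix_vector_mul_assoc matrix_mul_assoc matrix_vector_mult_basis[symmetric])
  then show ?thesis
    using grad_half_norm2_affine[of "axis xo 1" "mat 1" "Xmat xs *v column k A" V] by simp
qed

lemma grad_loss_A_nth:
  "grad (\<lambda>A'. loss V A' (xs, k, xo)) A $ t $ k'
     = (if k' = k
        then - (V \<bullet> outer (axis xo 1 - V *v (Xmat xs *v column k A)) (Xmat xs *v axis t 1))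
        else 0)"
proof -
  define r where "r = axis xo 1 - V *v (Xmat xs *v column k A)"
  have "(\<lambda>A'. loss V A' (xs, k, xo))
      = (\<lambda>A'. 1/2 * (norm (axis xo 1 - (V ** Xmat xs) *v (A' *v axis k 1)))\<^sup>2)"
    by (simp add: loss_def matrix_vector_mul_assoc)
  then have "grad (\<lambda>A'. loss V A' (xs, k, xo)) A = - outer (r v* (V ** Xmat xs)) (axis k 1)"
    using grad_half_norm2_affine[of "axis xo 1" "V ** Xmat xs" "axis k 1" A]
    by (simp add: r_def matrix_vector_mul_assoc matrix_vector_mult_basis)
  moreover have "(r v* (V ** Xmat xs)) $ t = V \<bullet> outer r (Xmat xs *v axis t 1)"
    by (simp add: matrix_vector_mult_basis vector_matrix_mult_def matrix_matrix_mult_def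
        inner_vec_def outer_def column_def sum_distrib_left mult_ac)
  ultimately show ?thesis
    by (simp add: r_def outer_def axis_def)
qed

section \<open>Moments of the token matrix\<close>

lemma sum_fun_prod_eq_prod_sum:
  fixes F :: "'t::finite \<Rightarrow> 'n::finite \<Rightarrow> real"
  shows "(\<Sum>xs\<in>UNIV. \<Prod>t\<in>UNIV. F t (xs t)) = (\<Prod>t\<in>UNIV. \<Sum>n\<in>UNIV. F t n)"
proof -
  have "(UNIV::('t\<Rightarrow>'n) set) = PiE UNIV (\<lambda>_. UNIV)" by auto
  then show ?thesis by (simp add: prod_sum_PiE)
qed

lemma sum_prod_mu_indicator_pair:
  fixes mu :: "real^'n::finite"
  assumes "(\<Sum>i\<in>UNIV. mu $ i) = 1"
  shows "(\<Sum>xs\<in>(UNIV::('t::finite\<Rightarrow>'n) set).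
            (\<Prod>t\<in>UNIV. mu $ xs t) * (if xs t = i then 1 else 0) * (if xs s = j then 1 else 0))
       = (if t = s then (if i = j then mu $ i else 0) else mu $ i * mu $ j)"
proof -
  define F where "F u n = mu $ n * (if u = t then (if n = i then 1 else 0) else 1)
      * (if u = s then (if n = j then 1 else 0) else 1)" for u n
  have "(\<Prod>u\<in>UNIV. F u (xs u))
      = (\<Prod>t\<in>UNIV. mu $ xs t) * (if xs t = i then 1 else 0) * (if xs s = j then 1 else 0)"
    for xs :: "'t \<Rightarrow> 'n"
    unfolding F_def prod.distrib by (simp add: prod.If_cases)
  then have "(\<Sum>xs\<in>(UNIV::('t\<Rightarrow>'n) set).
        (\<Prod>t\<in>UNIV. mu $ xs t) * (if xs t = i then 1 else 0) * (if xs s = j then 1 else 0))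
      = (\<Prod>u\<in>UNIV. \<Sum>n\<in>UNIV. F u n)"
    by (simp flip: sum_fun_prod_eq_prod_sum)
  also have "\<dots> = (if t = s then (if i = j then mu $ i else 0) else mu $ i * mu $ j)"
  proof (cases "t = s")
    case True
    then have "(\<Sum>n\<in>UNIV. F u n) = (if u = t then (if i = j then mu $ i else 0) else 1)" for u
      using assms by (cases "u = t"; cases "i = j") (simp_all add: F_def of_bool_def[symmetric])
    then show ?thesis using True by simp
  next
    case False
    then have "(\<Sum>n\<in>UNIV. F u n) = (if u = t then mu $ i else if u = s then mu $ j else 1)" for u
      using assms by (cases "u = t"; cases "u = s") (simp_all add: F_def of_bool_def[symmetric])
    then show ?thesis using False by (simp add: prod.If_cases Diff_eq Int_commute)
  qed
  finally show ?thesis .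
qed

lemma sum_sum_if_eq:
  fixes b c :: "'t \<Rightarrow> real"
  assumes "finite S"
  shows "(\<Sum>t\<in>S. \<Sum>s\<in>S. b t * c s * (if t = s then X else Y))
       = (\<Sum>t\<in>S. b t * c t) * (X - Y) + sum b S * sum c S * Y"
proof -
  have "b t * c s * (if t = s then X else Y) = b t * c s * Y + (if s = t then b t * c t * (X - Y) else 0)"
    for t s
    by (auto simp: algebra_simps)
  then have "(\<Sum>t\<in>S. \<Sum>s\<in>S. b t * c s * (if t = s then X else Y))
      = (\<Sum>t\<in>S. \<Sum>s\<in>S. b t * c s * Y) + (\<Sum>t\<in>S. b t * c t) * (X - Y)"
    using assms by (simp add: sum.distrib sum_distrib_right)
  also have "(\<Sum>t\<in>S. \<Sum>s\<in>S. b t * c s * Y) = (\<Sum>t\<in>S. b t * (sum c S * Y))"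
    by (simp add: sum_distrib_left sum_distrib_right mult_ac)
  also have "\<dots> = sum b S * sum c S * Y"
    by (simp only: sum_distrib_right[symmetric] mult.assoc)
  finally show ?thesis by simp
qed

lemma expected_outer_Xmat:
  fixes mu :: "real^'n::finite" and b c :: "real^'t::finite"
  assumes "(\<Sum>i\<in>UNIV. mu $ i) = 1"
  shows "(\<Sum>xs\<in>UNIV. (\<Prod>t\<in>UNIV. mu $ xs t) *\<^sub>R outer (Xmat xs *v b) (Xmat xs *v c))
       = (b \<bullet> c) *\<^sub>R (diag_vec mu - outer mu mu)
         + ((\<Sum>t\<in>UNIV. b $ t) * (\<Sum>t\<in>UNIV. c $ t)) *\<^sub>R outer mu mu"
proof -
  have "(\<Sum>xs\<in>UNIV. (\<Prod>t\<in>UNIV. mu $ xs t) * ((Xmat xs *v b) $ i * (Xmat xs *v c) $ j))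
      = (b \<bullet> c) * ((if i = j then mu $ i else 0) - mu $ i * mu $ j)
        + (\<Sum>t\<in>UNIV. b $ t) * (\<Sum>t\<in>UNIV. c $ t) * (mu $ i * mu $ j)" for i j
  proof -
    have "(\<Sum>xs\<in>UNIV. (\<Prod>t\<in>UNIV. mu $ xs t) * ((Xmat xs *v b) $ i * (Xmat xs *v c) $ j))
        = (\<Sum>xs\<in>UNIV. \<Sum>t\<in>UNIV. \<Sum>s\<in>UNIV. b $ t * c $ s *
             ((\<Prod>t\<in>UNIV. mu $ xs t) * (if xs t = i then 1 else 0) * (if xs s = j then 1 else 0)))"
    proof (rule sum.cong[OF refl])
      fix xs :: "'t \<Rightarrow> 'n"
      have "(Xmat xs *v b) $ i * (Xmat xs *v c) $ j
          = (\<Sum>t\<in>UNIV. \<Sum>s\<in>UNIV. ((if xs t = i then 1 else 0) * b $ t) * ((if xs s = j then 1 else 0) * c $ s))"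
        unfolding Xmat_def matrix_vector_mult_def by (simp add: sum_product)
      then show "(\<Prod>t\<in>UNIV. mu $ xs t) * ((Xmat xs *v b) $ i * (Xmat xs *v c) $ j)
          = (\<Sum>t\<in>UNIV. \<Sum>s\<in>UNIV. b $ t * c $ s *
             ((\<Prod>t\<in>UNIV. mu $ xs t) * (if xs t = i then 1 else 0) * (if xs s = j then 1 else 0)))"
        by (simp add: sum_distrib_left mult_ac)
    qed
    also have "\<dots> = (\<Sum>t\<in>UNIV. \<Sum>s\<in>UNIV. b $ t * c $ s *
             (\<Sum>xs\<in>UNIV. (\<Prod>t\<in>UNIV. mu $ xs t) * (if xs t = i then 1 else 0) * (if xs s = j then 1 else 0)))"
      unfolding sum_distrib_left
      by (subst sum.swap) (rule sum.cong[OF refl], rule sum.swap)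
    also have "\<dots> = (b \<bullet> c) * ((if i = j then mu $ i else 0) - mu $ i * mu $ j)
        + (\<Sum>t\<in>UNIV. b $ t) * (\<Sum>t\<in>UNIV. c $ t) * (mu $ i * mu $ j)"
      by (simp add: sum_prod_mu_indicator_pair[OF assms] sum_sum_if_eq inner_vec_def)
    finally show ?thesis .
  qed
  then show ?thesis
    by (simp add: vec_eq_iff outer_def diag_vec_def sum_component algebra_simps)
qed

lemma sum_UNIV_sample:
  fixes F :: "('t::finite \<Rightarrow> 'n::finite) \<times> 'n \<times> 'n \<Rightarrow> 'b::comm_monoid_add"
  shows "(\<Sum>s\<in>UNIV. F s) = (\<Sum>xs\<in>UNIV. \<Sum>k\<in>UNIV. \<Sum>xo\<in>UNIV. F (xs, k, xo))"
proof -
  have "(\<Sum>s\<in>UNIV. F s) = (\<Sum>xs\<in>UNIV. \<Sum>ko\<in>UNIV \<times> UNIV. F (xs, ko))"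
    by (simp add: sum.cartesian_product)
  also have "\<dots> = (\<Sum>xs\<in>UNIV. \<Sum>k\<in>UNIV. \<Sum>xo\<in>UNIV. F (xs, k, xo))"
    by (simp add: sum.cartesian_product)
  finally show ?thesis .
qed

lemma next_token_prob_eq:
  "(P *v (Xmat xs *v column k Q)) $ xo = (\<Sum>t\<in>UNIV. Q $ t $ k * P $ xo $ xs t)"
proof -
  have "(P *v (Xmat xs *v column k Q)) $ xo
      = (\<Sum>n\<in>UNIV. \<Sum>t\<in>UNIV. P $ xo $ n * ((if xs t = n then 1 else 0) * Q $ t $ k))"
    by (simp add: matrix_vector_mult_def Xmat_def column_def sum_distrib_left)
  also have "\<dots> = (\<Sum>t\<in>UNIV. \<Sum>n\<in>UNIV. P $ xo $ n * ((if xs t = n then 1 else 0) * Q $ t $ k))"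
    by (rule sum.swap)
  also have "\<dots> = (\<Sum>t\<in>UNIV. Q $ t $ k * P $ xo $ xs t)"
  proof (rule sum.cong[OF refl])
    fix t
    have "P $ xo $ n * ((if xs t = n then 1 else 0) * Q $ t $ k)
        = (if n = xs t then Q $ t $ k * P $ xo $ xs t else 0)" for n
      by auto
    then show "(\<Sum>n\<in>UNIV. P $ xo $ n * ((if xs t = n then 1 else 0) * Q $ t $ k))
        = Q $ t $ k * P $ xo $ xs t"
      by simp
  qed
  finally show ?thesis .
qed

lemma sum_next_token_prob:
  assumes "\<forall>j. (\<Sum>i\<in>UNIV. P $ i $ j) = 1" and "\<forall>k. (\<Sum>t\<in>UNIV. Q $ t $ k) = 1"
  shows "(\<Sum>xo\<in>UNIV. (P *v (Xmat xs *v column k Q)) $ xo) = 1"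
proof -
  have "(\<Sum>xo\<in>UNIV. (P *v (Xmat xs *v column k Q)) $ xo)
      = (\<Sum>t\<in>UNIV. Q $ t $ k * (\<Sum>xo\<in>UNIV. P $ xo $ xs t))"
    unfolding next_token_prob_eq by (subst sum.swap) (simp add: sum_distrib_left)
  then show ?thesis
    using assms by simp
qed

lemma sum_scaleR_outer_axis_diff:
  fixes c z :: "real^'n::finite" and u :: "real^'m::finite"
  shows "(\<Sum>xo\<in>UNIV. (w * c $ xo) *\<^sub>R outer (axis xo 1 - z) u)
       = w *\<^sub>R (outer c u - (\<Sum>xo\<in>UNIV. c $ xo) *\<^sub>R outer z u)"
proof -
  have "(\<Sum>xo\<in>UNIV. w * c $ xo * ((if i = xo then 1 else 0) - z $ i) * u $ j)
      = w * c $ i * u $ j - w * u $ j * z $ i * (\<Sum>xo\<in>UNIV. c $ xo)" for i j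
  proof -
    have "w * c $ xo * ((if i = xo then 1 else 0) - z $ i) * u $ j
        = (if xo = i then w * c $ i * u $ j else 0) - w * u $ j * z $ i * c $ xo" for xo
      by (auto simp: algebra_simps)
    then show ?thesis
      by (simp add: sum_subtractf sum_distrib_left)
  qed
  then show ?thesis
    by (simp add: vec_eq_iff sum_component outer_def axis_def algebra_simps)
qed

lemma expected_residual_outer:
  fixes mu :: "real^'n::finite" and P V :: "real^'n^'n" and Q A :: "real^'n^'t::finite"
    and b :: "real^'t"
  assumes mu_sum: "(\<Sum>i\<in>UNIV. mu $ i) = 1"
    and P_col: "\<forall>j. (\<Sum>i\<in>UNIV. P $ i $ j) = 1" and P_mu: "P *v mu = mu"
    and Q_col: "\<forall>k. (\<Sum>t\<in>UNIV. Q $ t $ k) = 1"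
    and A_col: "ones v* A = ones" and V_mu: "V *v mu = mu"
    and b_sum: "(\<Sum>t\<in>UNIV. b $ t) = 1"
  shows "(\<Sum>xs\<in>UNIV. \<Sum>xo\<in>UNIV. sample_prob mu P Q (xs, k, xo)
            *\<^sub>R outer (axis xo 1 - V *v (Xmat xs *v column k A)) (Xmat xs *v b))
       = mu $ k *\<^sub>R ((column k Q \<bullet> b) *\<^sub>R (P ** diag_vec mu - outer mu mu)
                     - (column k A \<bullet> b) *\<^sub>R (V ** diag_vec mu - outer mu mu))"
proof -
  define pm where "pm xs = (\<Prod>t\<in>UNIV. mu $ xs t)" for xs :: "'t \<Rightarrow> 'n"
  define q a where "q = column k Q" and "a = column k A"
  have q_sum: "(\<Sum>t\<in>UNIV. q $ t) = 1" and a_sum: "(\<Sum>t\<in>UNIV. a $ t) = 1"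
    using Q_col A_col[unfolded ones_vector_matrix_mult_eq_ones_iff]
    by (simp_all add: q_def a_def column_def)
  have "(\<Sum>xo\<in>UNIV. sample_prob mu P Q (xs, k, xo)
          *\<^sub>R outer (axis xo 1 - V *v (Xmat xs *v a)) (Xmat xs *v b))
      = (pm xs * mu $ k) *\<^sub>R (P ** outer (Xmat xs *v q) (Xmat xs *v b)
                               - V ** outer (Xmat xs *v a) (Xmat xs *v b))" for xs
    using sum_scaleR_outer_axis_diff[of "pm xs * mu $ k" "P *v (Xmat xs *v q)"]
      sum_next_token_prob[OF P_col Q_col, of xs k]
    by (simp add: sample_prob_def next_token_prob_eq pm_def q_def matrix_mul_outer)
  then have "(\<Sum>xs\<in>UNIV. \<Sum>xo\<in>UNIV. sample_prob mu P Q (xs, k, xo)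
          *\<^sub>R outer (axis xo 1 - V *v (Xmat xs *v a)) (Xmat xs *v b))
      = mu $ k *\<^sub>R (P ** (\<Sum>xs\<in>UNIV. pm xs *\<^sub>R outer (Xmat xs *v q) (Xmat xs *v b))
                     - V ** (\<Sum>xs\<in>UNIV. pm xs *\<^sub>R outer (Xmat xs *v a) (Xmat xs *v b)))"
    by (simp add: matrix_mul_sum_scaleR_right scaleR_sum_right scaleR_diff_right sum_subtractf
        mult.commute)
  also have "\<dots> = mu $ k *\<^sub>R ((q \<bullet> b) *\<^sub>R (P ** diag_vec mu - outer mu mu)
                                - (a \<bullet> b) *\<^sub>R (V ** diag_vec mu - outer mu mu))"
    unfolding pm_def expected_outer_Xmat[OF mu_sum] q_sum a_sum b_sum
    by (simp add: matrix_add_ldistrib matrix_diff_ldistrib matrix_mul_scaleR_right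
        matrix_mul_outer P_mu V_mu algebra_simps)
  finally show ?thesis
    by (simp add: a_def q_def)
qed

lemma mu_inner_eq_sum_columns:
  "mu_inner mu (A::real^'n::finite^'t::finite) Q = (\<Sum>k\<in>UNIV. mu $ k * (column k Q \<bullet> column k A))"
  unfolding mu_inner_eq_sum
  by (subst sum.swap) (simp add: column_def inner_vec_def sum_distrib_left mult_ac)

lemma inner_matrix_mul_diag_vec: "V \<bullet> (P ** diag_vec mu) = mu_inner mu V P"
  by (simp add: matrix_mul_diag_vec mu_inner_eq_sum inner_vec_def mult_ac)

lemma inner_outer: "V \<bullet> outer x y = x \<bullet> (V *v y)"
  by (simp add: outer_def inner_vec_def matrix_vector_mult_def sum_distrib_left mult_ac)

lemma expected_grad_V:
  fixes mu :: "real^'n::finite" and P V :: "real^'n^'n" and Q A :: "real^'n^'t::finite"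
  assumes mu_sum: "(\<Sum>i\<in>UNIV. mu $ i) = 1"
    and P_col: "\<forall>j. (\<Sum>i\<in>UNIV. P $ i $ j) = 1" and P_mu: "P *v mu = mu"
    and Q_col: "\<forall>k. (\<Sum>t\<in>UNIV. Q $ t $ k) = 1"
    and A_col: "ones v* A = ones" and V_mu: "V *v mu = mu"
  shows "(\<Sum>s\<in>UNIV. sample_prob mu P Q s *\<^sub>R grad (\<lambda>V'. loss V' A s) V)
       = mu_norm2 mu A *\<^sub>R (V ** diag_vec mu - outer mu mu)
         - mu_inner mu A Q *\<^sub>R (P ** diag_vec mu - outer mu mu)"
proof -
  have "(\<Sum>xs\<in>UNIV. \<Sum>xo\<in>UNIV. sample_prob mu P Q (xs, k, xo) *\<^sub>R grad (\<lambda>V'. loss V' A (xs, k, xo)) V)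
      = (mu $ k * (column k A \<bullet> column k A)) *\<^sub>R (V ** diag_vec mu - outer mu mu)
        - (mu $ k * (column k Q \<bullet> column k A)) *\<^sub>R (P ** diag_vec mu - outer mu mu)" for k
    using expected_residual_outer[OF mu_sum P_col P_mu Q_col A_col V_mu, of "column k A" k]
      A_col[unfolded ones_vector_matrix_mult_eq_ones_iff]
    by (simp add: grad_loss_V column_def sum_negf algebra_simps)
  then have "(\<Sum>s\<in>UNIV. sample_prob mu P Q s *\<^sub>R grad (\<lambda>V'. loss V' A s) V)
      = (\<Sum>k\<in>UNIV. (mu $ k * (column k A \<bullet> column k A)) *\<^sub>R (V ** diag_vec mu - outer mu mu)
        - (mu $ k * (column k Q \<bullet> column k A)) *\<^sub>R (P ** diag_vec mu - outer mu mu))"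
    unfolding sum_UNIV_sample by (subst sum.swap) simp
  then show ?thesis
    by (simp add: mu_norm2_def mu_inner_eq_sum_columns sum_subtractf scaleR_sum_left)
qed

lemma expected_grad_A_nth:
  fixes mu :: "real^'n::finite" and P V :: "real^'n^'n" and Q A :: "real^'n^'t::finite"
  assumes mu_sum: "(\<Sum>i\<in>UNIV. mu $ i) = 1"
    and P_col: "\<forall>j. (\<Sum>i\<in>UNIV. P $ i $ j) = 1" and P_mu: "P *v mu = mu"
    and Q_col: "\<forall>k. (\<Sum>t\<in>UNIV. Q $ t $ k) = 1"
    and A_col: "ones v* A = ones" and V_mu: "V *v mu = mu"
  shows "(\<Sum>s\<in>UNIV. sample_prob mu P Q s *\<^sub>R grad (\<lambda>A'. loss V A' s) A) $ t $ k
       = mu $ k * (A $ t $ k * (mu_norm2 mu V - mu \<bullet> mu) - Q $ t $ k * (mu_inner mu V P - mu \<bullet> mu))"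
proof -
  define R where "R xs xo = outer (axis xo 1 - V *v (Xmat xs *v column k A)) (Xmat xs *v axis t 1)"
    for xs xo
  have delta: "(\<Sum>k'\<in>UNIV. \<Sum>xo\<in>UNIV. p k' xo * (if k = k' then g k' xo else 0))
      = (\<Sum>xo\<in>UNIV. p k xo * g k xo)" for p g :: "'n \<Rightarrow> 'n \<Rightarrow> real"
    by (subst sum.swap) (simp add: if_distrib cong: if_cong)
  have "(\<Sum>s\<in>UNIV. sample_prob mu P Q s *\<^sub>R grad (\<lambda>A'. loss V A' s) A) $ t $ k
      = - (V \<bullet> (\<Sum>xs\<in>UNIV. \<Sum>xo\<in>UNIV. sample_prob mu P Q (xs, k, xo) *\<^sub>R R xs xo))"
    by (simp add: sum_UNIV_sample sum_component grad_loss_A_nth R_def delta inner_sum_right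
        sum_negf)
  also have "\<dots> = - (V \<bullet> (mu $ k *\<^sub>R (Q $ t $ k *\<^sub>R (P ** diag_vec mu - outer mu mu)
                                       - A $ t $ k *\<^sub>R (V ** diag_vec mu - outer mu mu))))"
  proof -
    have "(\<Sum>i\<in>UNIV. axis t 1 $ i) = (1::real)"
      by (simp add: axis_def)
    moreover have "column k Q \<bullet> axis t 1 = Q $ t $ k" and "column k A \<bullet> axis t 1 = A $ t $ k"
      by (simp_all add: column_def inner_axis)
    ultimately show ?thesis
      using expected_residual_outer[OF mu_sum P_col P_mu Q_col A_col V_mu, of "axis t 1" k]
      by (simp add: R_def)
  qed
  finally show ?thesis
    by (simp add: inner_diff_right inner_matrix_mul_diag_vec inner_outer V_mu mu_norm2_def
        algebra_simps)
qed

section \<open>Expected preconditioned gradients\<close>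

lemma preconditioned_moment_V:
  fixes mu :: "real^'n::finite" and M :: "real^'n^'n"
  assumes mu_pos: "\<forall>i. mu $ i > 0" and mu_sum: "(\<Sum>i\<in>UNIV. mu $ i) = 1"
    and M_mu: "M *v mu = mu" and M_col: "ones v* M = ones"
  shows "(mat 1 - (1 / real CARD('n)) *\<^sub>R outer ones ones) ** (M ** diag_vec mu - outer mu mu)
           ** diag_vec (\<chi> i. 1 / mu $ i) ** (mat 1 - (1 / (mu \<bullet> mu)) *\<^sub>R outer mu mu)
       = M - outer mu ones"
proof -
  have "ones v* (M ** diag_vec mu - outer mu mu) = 0"
    using M_col mu_sum
    by (simp add: vector_matrix_mult_diff_rdistrib vector_matrix_mult_outer ones_inner
        flip: vector_matrix_mul_assoc)
       (simp add: vec_eq_iff vector_matrix_mult_def diag_vec_def)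
  then have left: "(mat 1 - (1 / real CARD('n)) *\<^sub>R outer ones ones) ** (M ** diag_vec mu - outer mu mu)
      = M ** diag_vec mu - outer mu mu"
    by (simp add: matrix_diff_rdistrib matrix_mul_scaleR_left outer_matrix_mul)
       (simp add: outer_def vec_eq_iff)
  have "(M $ i $ j * mu $ j - mu $ i * mu $ j) / mu $ j = M $ i $ j - mu $ i" for i j
    using mu_pos by (metis less_irrefl left_diff_distrib nonzero_mult_div_cancel_right)
  then have middle: "(M ** diag_vec mu - outer mu mu) ** diag_vec (\<chi> i. 1 / mu $ i) = M - outer mu ones"
    by (simp add: matrix_diff_rdistrib matrix_mul_diag_vec outer_def vec_eq_iff)
  have "(M - outer mu ones) *v mu = 0"
    using M_mu mu_sum by (simp add: matrix_vector_mult_diff_rdistrib outer_matrix_vector_mult ones_inner)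
  then have right: "(M - outer mu ones) ** (mat 1 - (1 / (mu \<bullet> mu)) *\<^sub>R outer mu mu) = M - outer mu ones"
    by (simp add: matrix_diff_ldistrib matrix_mul_scaleR_right matrix_mul_outer)
       (simp add: outer_def vec_eq_iff)
  show ?thesis
    using left middle right by simp
qed

lemma EpgradV_eq:
  fixes mu :: "real^'n::finite" and P V :: "real^'n^'n" and Q A :: "real^'n^'t::finite"
  assumes mu_pos: "\<forall>i. mu $ i > 0" and mu_sum: "(\<Sum>i\<in>UNIV. mu $ i) = 1"
    and P_col: "\<forall>j. (\<Sum>i\<in>UNIV. P $ i $ j) = 1" and P_mu: "P *v mu = mu"
    and Q_col: "\<forall>k. (\<Sum>t\<in>UNIV. Q $ t $ k) = 1"
    and A_col: "ones v* A = ones"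
    and V_col: "ones v* V = ones" and V_mu: "V *v mu = mu"
  shows "EpgradV mu P Q V A
       = mu_norm2 mu A *\<^sub>R (V - outer mu ones) - mu_inner mu A Q *\<^sub>R (P - outer mu ones)"
proof -
  define L :: "real^'n^'n" where "L = mat 1 - (1 / real CARD('n)) *\<^sub>R outer ones ones"
  define D :: "real^'n^'n" where "D = diag_vec (\<chi> i. 1 / mu $ i)"
  define R :: "real^'n^'n" where "R = mat 1 - (1 / (mu \<bullet> mu)) *\<^sub>R outer mu mu"
  have "EpgradV mu P Q V A = (\<Sum>s\<in>UNIV. sample_prob mu P Q s *\<^sub>R (L ** grad (\<lambda>V'. loss V' A s) V ** D ** R))"
    unfolding EpgradV_def pgradV_def L_def D_def R_def ..
  also have "\<dots> = L ** (\<Sum>s\<in>UNIV. sample_prob mu P Q s *\<^sub>R grad (\<lambda>V'. loss V' A s) V) ** D ** R"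
    by (simp only: matrix_mul_sum_scaleR_left matrix_mul_sum_scaleR_right)
  also have "\<dots> = mu_norm2 mu A *\<^sub>R (L ** (V ** diag_vec mu - outer mu mu) ** D ** R)
                 - mu_inner mu A Q *\<^sub>R (L ** (P ** diag_vec mu - outer mu mu) ** D ** R)"
    by (simp only: expected_grad_V[OF mu_sum P_col P_mu Q_col A_col V_mu] matrix_diff_ldistrib
        matrix_mul_scaleR_right matrix_diff_rdistrib matrix_mul_scaleR_left)
  also have "\<dots> = mu_norm2 mu A *\<^sub>R (V - outer mu ones) - mu_inner mu A Q *\<^sub>R (P - outer mu ones)"
    unfolding L_def D_def R_def
    using P_col preconditioned_moment_V[OF mu_pos mu_sum V_mu V_col]
      preconditioned_moment_V[OF mu_pos mu_sum P_mu]
    by (simp add: ones_vector_matrix_mult_eq_ones_iff)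
  finally show ?thesis .
qed

lemma centering_matrix_vector_mult_nth:
  "((mat 1 - c *\<^sub>R outer ones ones) *v x) $ t = x $ t - c * (\<Sum>r\<in>UNIV. x $ r)"
  by (simp add: matrix_vector_mult_diff_rdistrib outer_matrix_vector_mult ones_inner
      flip: scaleR_matrix_vector_assoc)

lemma EpgradA_eq:
  fixes mu :: "real^'n::finite" and P V :: "real^'n^'n" and Q A :: "real^'n^'t::finite"
  assumes mu_pos: "\<forall>i. mu $ i > 0" and mu_sum: "(\<Sum>i\<in>UNIV. mu $ i) = 1"
    and P_col: "\<forall>j. (\<Sum>i\<in>UNIV. P $ i $ j) = 1" and P_mu: "P *v mu = mu"
    and Q_col: "\<forall>k. (\<Sum>t\<in>UNIV. Q $ t $ k) = 1"
    and A_col: "ones v* A = ones" and V_mu: "V *v mu = mu"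
  shows "EpgradA mu P Q V A
       = (mu_norm2 mu V - mu \<bullet> mu) *\<^sub>R (A - (1 / real CARD('t)) *\<^sub>R outer ones ones)
         - (mu_inner mu V P - mu \<bullet> mu) *\<^sub>R (Q - (1 / real CARD('t)) *\<^sub>R outer ones ones)"
proof -
  define G where "G = (\<Sum>s\<in>UNIV. sample_prob mu P Q s *\<^sub>R grad (\<lambda>A'. loss V A' s) A)"
  define c where "c = 1 / real CARD('t)"
  define c1 c2 where "c1 = mu_norm2 mu V - mu \<bullet> mu" and "c2 = mu_inner mu V P - mu \<bullet> mu"
  have G: "G $ r $ k = mu $ k * (A $ r $ k * c1 - Q $ r $ k * c2)" for r k
    unfolding G_def c1_def c2_def by (rule expected_grad_A_nth[OF mu_sum P_col P_mu Q_col A_col V_mu])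
  have "EpgradA mu P Q V A $ t $ k = (1 / mu $ k) * (G $ t $ k - c * (\<Sum>r\<in>UNIV. G $ r $ k))" for t k
  proof -
    have "EpgradA mu P Q V A $ t $ k
        = (\<Sum>s\<in>UNIV. sample_prob mu P Q s * ((1 / mu $ k) * (grad (\<lambda>A'. loss V A' s) A $ t $ k
              - c * (\<Sum>r\<in>UNIV. grad (\<lambda>A'. loss V A' s) A $ r $ k))))"
      unfolding EpgradA_def pgradA_def c_def
      by (simp add: sum_component centering_matrix_vector_mult_nth column_def)
    also have "\<dots> = (1 / mu $ k) * (G $ t $ k - c * (\<Sum>r\<in>UNIV. G $ r $ k))"
      unfolding G_def
      by (simp add: sum_component sum_distrib_left right_diff_distrib sum_subtractf algebra_simps)
         (subst sum.swap, simp add: sum_distrib_left mult_ac)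
    finally show ?thesis .
  qed
  also have "(1 / mu $ k) * (G $ t $ k - c * (\<Sum>r\<in>UNIV. G $ r $ k))
      = c1 * (A $ t $ k - c) - c2 * (Q $ t $ k - c)" for t k
    unfolding G using mu_pos[rule_format, of k] A_col[unfolded ones_vector_matrix_mult_eq_ones_iff] Q_col
    by (simp add: sum_subtractf field_simps flip: sum_distrib_left sum_distrib_right)
  finally show ?thesis
    by (simp add: vec_eq_iff c_def c1_def c2_def outer_def)
qed

lemma pgradV_mult_mu:
  assumes "mu \<bullet> mu \<noteq> 0"
  shows "pgradV mu V A s *v mu = 0"
proof -
  have "(mat 1 - (1 / (mu \<bullet> mu)) *\<^sub>R outer mu mu) *v mu = 0"
    using assms by (simp add: matrix_vector_mult_diff_rdistrib outer_matrix_vector_mult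
        flip: scaleR_matrix_vector_assoc)
  then show ?thesis
    by (simp add: pgradV_def flip: matrix_vector_mul_assoc)
qed

lemma EpgradV_mult_mu: "mu \<bullet> mu \<noteq> 0 \<Longrightarrow> EpgradV mu P Q V A *v mu = 0"
  by (simp add: EpgradV_def matrix_vector_mult_sum_left pgradV_mult_mu
      flip: scaleR_matrix_vector_assoc)

lemma BpgradV_mult_mu: "mu \<bullet> mu \<noteq> 0 \<Longrightarrow> BpgradV mu B smp V A *v mu = 0"
  by (simp add: BpgradV_def matrix_vector_mult_sum_left pgradV_mult_mu
      flip: scaleR_matrix_vector_assoc)

lemma ones_vector_matrix_mult_pgradA:
  fixes A :: "real^'n::finite^'t::finite"
  shows "ones v* pgradA mu V A s = 0"
proof -
  have "(\<Sum>t\<in>UNIV. (y $ t - (\<Sum>r\<in>UNIV. y $ r) / real CARD('t)) / c) = 0" for y :: "real^'t" and c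
    by (simp add: sum_subtractf flip: sum_divide_distrib)
  then show ?thesis
    by (simp add: pgradA_def vec_eq_iff vector_matrix_mult_def centering_matrix_vector_mult_nth)
qed

lemma ones_vector_matrix_mult_EpgradA: "ones v* EpgradA mu P Q V A = 0"
  by (simp add: EpgradA_def vector_matrix_mult_sum_right vector_scaleR_matrix_ac
      ones_vector_matrix_mult_pgradA)

lemma ones_vector_matrix_mult_BpgradA: "ones v* BpgradA mu B smp V A = 0"
  by (simp add: BpgradA_def vector_matrix_mult_sum_right vector_scaleR_matrix_ac
      ones_vector_matrix_mult_pgradA)

section \<open>Centred coordinates\<close>

lemma mu_inner_outer_mu_ones: "mu_inner mu M (outer mu ones) = mu \<bullet> (M *v mu)"
  by (simp add: mu_inner_eq_sum outer_def inner_vec_def matrix_vector_mult_def sum_distrib_left mult_ac)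

lemma mu_inner_scaleR_outer_ones:
  "mu_inner mu (M::real^'n::finite^'t::finite) (c *\<^sub>R outer ones ones)
     = c * (\<Sum>j\<in>UNIV. mu $ j * (\<Sum>t\<in>UNIV. M $ t $ j))"
  unfolding mu_inner_eq_sum
  by (simp add: outer_def sum_distrib_left sum_distrib_right mult_ac sum.swap[of _ "UNIV::'t set"])

lemma mu_inner_sub_outer_mu_ones:
  fixes mu :: "real^'n::finite" and M M' :: "real^'n^'n"
  assumes "(\<Sum>i\<in>UNIV. mu $ i) = 1" and "M *v mu = mu" and "M' *v mu = mu"
  shows "mu_inner mu (M - outer mu ones) (M' - outer mu ones) = mu_inner mu M M' - mu \<bullet> mu"
proof -
  have "mu_inner mu X (outer mu ones) = mu \<bullet> mu" if "X *v mu = mu" for X :: "real^'n^'n"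
    using that by (simp add: mu_inner_outer_mu_ones)
  moreover have "outer mu ones *v mu = mu"
    using assms(1) by (simp add: outer_matrix_vector_mult ones_inner)
  ultimately show ?thesis
    using assms(2,3)
    by (simp add: mu_inner_diff_left mu_inner_diff_right mu_inner_commute[of mu "outer mu ones" M'])
qed

lemma mu_inner_sub_uniform:
  fixes mu :: "real^'n::finite" and M M' :: "real^'n^'t::finite"
  assumes "(\<Sum>i\<in>UNIV. mu $ i) = 1"
    and "ones v* M = ones" and "ones v* M' = ones"
  shows "mu_inner mu (M - (1 / real CARD('t)) *\<^sub>R outer ones ones) (M' - (1 / real CARD('t)) *\<^sub>R outer ones ones)
       = mu_inner mu M M' - 1 / real CARD('t)"
proof -
  let ?J = "(1 / real CARD('t)) *\<^sub>R outer ones ones :: real^'n^'t"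
  have "mu_inner mu X ?J = 1 / real CARD('t)" if "ones v* X = ones" for X
    using that assms(1) by (simp add: mu_inner_scaleR_outer_ones ones_vector_matrix_mult_eq_ones_iff)
  moreover have "ones v* ?J = ones"
    by (simp add: vector_scaleR_matrix_ac vector_matrix_mult_outer ones_inner vec_eq_iff)
  ultimately show ?thesis
    using assms(2,3)
    by (simp add: mu_inner_diff_left mu_inner_diff_right mu_inner_commute[of mu ?J M'])
qed

lemma K_P_eq_mu_norm2:
  assumes "(\<Sum>i\<in>UNIV. mu $ i) = 1" and "P *v mu = mu"
  shows "K_P mu P = mu_norm2 mu (P - outer mu ones)"
  using mu_inner_sub_outer_mu_ones[OF assms(1,2,2)] by (simp add: K_P_def mu_norm2_def)

lemma alpha_V_eq:
  assumes "(\<Sum>i\<in>UNIV. mu $ i) = 1" and "P *v mu = mu" and "V *v mu = mu"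
  shows "alpha_V mu P V
       = mu_inner mu (V - outer mu ones) (P - outer mu ones) / mu_norm2 mu (P - outer mu ones)"
  using mu_inner_sub_outer_mu_ones[OF assms(1,3,2)]
  by (simp add: alpha_V_def K_P_eq_mu_norm2[OF assms(1,2)])

lemma Delta_V_eq_mu_residual:
  assumes "(\<Sum>i\<in>UNIV. mu $ i) = 1" and "P *v mu = mu" and "V *v mu = mu"
  shows "Delta_V mu P V = mu_residual mu (V - outer mu ones) (P - outer mu ones)"
  by (simp add: Delta_V_def mu_residual_def alpha_V_eq[OF assms, symmetric] algebra_simps)

lemma K_Q_eq_mu_norm2:
  fixes Q :: "real^'n::finite^'t::finite"
  assumes "(\<Sum>i\<in>UNIV. mu $ i) = 1" and "ones v* Q = ones"
  shows "K_Q mu Q = mu_norm2 mu (Q - (1 / real CARD('t)) *\<^sub>R outer ones ones)"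
  using mu_inner_sub_uniform[OF assms(1,2,2)] by (simp add: K_Q_def mu_norm2_def)

lemma alpha_A_eq:
  fixes Q A :: "real^'n::finite^'t::finite"
  assumes "(\<Sum>i\<in>UNIV. mu $ i) = 1" and "ones v* Q = ones" and "ones v* A = ones"
  shows "alpha_A mu Q A
       = mu_inner mu (A - (1 / real CARD('t)) *\<^sub>R outer ones ones) (Q - (1 / real CARD('t)) *\<^sub>R outer ones ones)
         / mu_norm2 mu (Q - (1 / real CARD('t)) *\<^sub>R outer ones ones)"
  using mu_inner_sub_uniform[OF assms(1,3,2)]
  by (simp add: alpha_A_def K_Q_eq_mu_norm2[OF assms(1,2)])

lemma Delta_A_eq_mu_residual:
  fixes Q A :: "real^'n::finite^'t::finite"
  assumes "(\<Sum>i\<in>UNIV. mu $ i) = 1" and "ones v* Q = ones" and "ones v* A = ones"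
  shows "Delta_A mu Q A
       = mu_residual mu (A - (1 / real CARD('t)) *\<^sub>R outer ones ones) (Q - (1 / real CARD('t)) *\<^sub>R outer ones ones)"
  by (simp add: Delta_A_def mu_residual_def alpha_A_eq[OF assms, symmetric] algebra_simps)

lemma mu_norm2_V_decomp:
  assumes mu_pos: "\<forall>i. mu $ i > 0" and mu_sum: "(\<Sum>i\<in>UNIV. mu $ i) = 1"
    and P_mu: "P *v mu = mu" and V_mu: "V *v mu = mu"
  shows "mu_norm2 mu V - mu \<bullet> mu = K_P mu P * (alpha_V mu P V)\<^sup>2 + mu_norm2 mu (Delta_V mu P V)"
proof -
  have "mu_norm2 mu V - mu \<bullet> mu = mu_norm2 mu (V - outer mu ones)"
    using mu_inner_sub_outer_mu_ones[OF mu_sum V_mu V_mu] by (simp add: mu_norm2_def)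
  also have "\<dots> = (alpha_V mu P V)\<^sup>2 * K_P mu P + mu_norm2 mu (Delta_V mu P V)"
    unfolding alpha_V_eq[OF mu_sum P_mu V_mu] K_P_eq_mu_norm2[OF mu_sum P_mu]
      Delta_V_eq_mu_residual[OF mu_sum P_mu V_mu]
    using mu_pos by (simp add: less_imp_le mu_norm2_eq_proj_plus_mu_residual)
  finally show ?thesis
    by simp
qed

lemma mu_norm2_A_decomp:
  fixes Q A :: "real^'n::finite^'t::finite"
  assumes mu_pos: "\<forall>i. mu $ i > 0" and mu_sum: "(\<Sum>i\<in>UNIV. mu $ i) = 1"
    and Q_col: "ones v* Q = ones" and A_col: "ones v* A = ones"
  shows "mu_norm2 mu A
       = (alpha_A mu Q A)\<^sup>2 * K_Q mu Q + 1 / real CARD('t) + mu_norm2 mu (Delta_A mu Q A)"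
proof -
  have "mu_norm2 mu A - 1 / real CARD('t)
      = mu_norm2 mu (A - (1 / real CARD('t)) *\<^sub>R outer ones ones)"
    using mu_inner_sub_uniform[OF mu_sum A_col A_col] by (simp add: mu_norm2_def)
  also have "\<dots> = (alpha_A mu Q A)\<^sup>2 * K_Q mu Q + mu_norm2 mu (Delta_A mu Q A)"
    unfolding alpha_A_eq[OF mu_sum Q_col A_col] K_Q_eq_mu_norm2[OF mu_sum Q_col]
      Delta_A_eq_mu_residual[OF mu_sum Q_col A_col]
    using mu_pos by (simp add: less_imp_le mu_norm2_eq_proj_plus_mu_residual)
  finally show ?thesis
    by simp
qed

lemma mu_norm2_Delta_V_step:
  fixes mu :: "real^'n::finite" and P V h :: "real^'n^'n" and Q A :: "real^'n^'t::finite"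
  assumes mu_pos: "\<forall>i. mu $ i > 0" and mu_sum: "(\<Sum>i\<in>UNIV. mu $ i) = 1"
    and P_col: "\<forall>j. (\<Sum>i\<in>UNIV. P $ i $ j) = 1" and P_mu: "P *v mu = mu"
    and Q_col: "\<forall>k. (\<Sum>t\<in>UNIV. Q $ t $ k) = 1"
    and A_col: "ones v* A = ones"
    and V_col: "ones v* V = ones" and V_mu: "V *v mu = mu"
    and h_mu: "h *v mu = 0"
  shows "mu_norm2 mu (Delta_V mu P (V - \<eta> *\<^sub>R (EpgradV mu P Q V A + h)))
       = (1 - \<eta> * mu_norm2 mu A)\<^sup>2 * mu_norm2 mu (Delta_V mu P V)
         - 2 * \<eta> * (1 - \<eta> * mu_norm2 mu A) * mu_inner mu (Delta_V mu P V) h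
         - \<eta>\<^sup>2 / K_P mu P * (mu_inner mu P h)\<^sup>2 + \<eta>\<^sup>2 * mu_norm2 mu h"
proof -
  define N :: "real^'n^'n" where "N = outer mu ones"
  have E: "EpgradV mu P Q V A = mu_norm2 mu A *\<^sub>R (V - N) - mu_inner mu A Q *\<^sub>R (P - N)"
    unfolding N_def by (rule EpgradV_eq[OF mu_pos mu_sum P_col P_mu Q_col A_col V_col V_mu])
  have N_mu: "N *v mu = mu"
    using mu_sum by (simp add: N_def outer_matrix_vector_mult ones_inner)
  have V'_mu: "(V - \<eta> *\<^sub>R (EpgradV mu P Q V A + h)) *v mu = mu"
    unfolding E using V_mu P_mu N_mu h_mu
    by (simp add: matrix_vector_mult_diff_rdistrib matrix_vector_mult_add_rdistrib
        flip: scaleR_matrix_vector_assoc)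
  have h_P: "mu_inner mu h (P - N) = mu_inner mu P h"
    using h_mu by (simp add: N_def mu_inner_diff_right mu_inner_outer_mu_ones mu_inner_commute)
  have "mu_norm2 mu (Delta_V mu P (V - \<eta> *\<^sub>R (EpgradV mu P Q V A + h)))
      = mu_norm2 mu (mu_residual mu
          ((V - N) - \<eta> *\<^sub>R (mu_norm2 mu A *\<^sub>R (V - N) - mu_inner mu A Q *\<^sub>R (P - N) + h)) (P - N))"
  proof -
    have "V - \<eta> *\<^sub>R (EpgradV mu P Q V A + h) - N
        = (V - N) - \<eta> *\<^sub>R (mu_norm2 mu A *\<^sub>R (V - N) - mu_inner mu A Q *\<^sub>R (P - N) + h)"
      unfolding E by simp
    then show ?thesis
      by (simp only: Delta_V_eq_mu_residual[OF mu_sum P_mu V'_mu] N_def)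
  qed
  also have "\<dots> = (1 - \<eta> * mu_norm2 mu A)\<^sup>2 * mu_norm2 mu (mu_residual mu (V - N) (P - N))
         - 2 * \<eta> * (1 - \<eta> * mu_norm2 mu A) * mu_inner mu (mu_residual mu (V - N) (P - N)) h
         - \<eta>\<^sup>2 / mu_norm2 mu (P - N) * (mu_inner mu h (P - N))\<^sup>2 + \<eta>\<^sup>2 * mu_norm2 mu h"
    using mu_pos by (simp add: less_imp_le mu_norm2_mu_residual_step)
  finally show ?thesis
    by (simp add: h_P[unfolded N_def] N_def Delta_V_eq_mu_residual[OF mu_sum P_mu V_mu]
        K_P_eq_mu_norm2[OF mu_sum P_mu])
qed

lemma mu_norm2_Delta_A_step:
  fixes mu :: "real^'n::finite" and P V :: "real^'n^'n" and Q A h :: "real^'n^'t::finite"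
  assumes mu_pos: "\<forall>i. mu $ i > 0" and mu_sum: "(\<Sum>i\<in>UNIV. mu $ i) = 1"
    and P_col: "\<forall>j. (\<Sum>i\<in>UNIV. P $ i $ j) = 1" and P_mu: "P *v mu = mu"
    and Q_col: "\<forall>k. (\<Sum>t\<in>UNIV. Q $ t $ k) = 1"
    and A_col: "ones v* A = ones" and V_mu: "V *v mu = mu"
    and h_col: "ones v* h = 0"
  shows "mu_norm2 mu (Delta_A mu Q (A - \<eta> *\<^sub>R (EpgradA mu P Q V A + h)))
       = (1 - \<eta> * (mu_norm2 mu V - mu \<bullet> mu))\<^sup>2 * mu_norm2 mu (Delta_A mu Q A)
         - 2 * \<eta> * (1 - \<eta> * (mu_norm2 mu V - mu \<bullet> mu)) * mu_inner mu (Delta_A mu Q A) h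
         - \<eta>\<^sup>2 / K_Q mu Q * (mu_inner mu h Q)\<^sup>2 + \<eta>\<^sup>2 * mu_norm2 mu h"
proof -
  define J :: "real^'n^'t" where "J = (1 / real CARD('t)) *\<^sub>R outer ones ones"
  have E: "EpgradA mu P Q V A = (mu_norm2 mu V - mu \<bullet> mu) *\<^sub>R (A - J) - (mu_inner mu V P - mu \<bullet> mu) *\<^sub>R (Q - J)"
    unfolding J_def by (rule EpgradA_eq[OF mu_pos mu_sum P_col P_mu Q_col A_col V_mu])
  have Q_col': "ones v* Q = ones"
    using Q_col by (simp add: ones_vector_matrix_mult_eq_ones_iff)
  have A'_col: "ones v* (A - \<eta> *\<^sub>R (EpgradA mu P Q V A + h)) = ones"
    using A_col h_col
    by (simp add: vector_matrix_mult_diff_rdistrib vector_matrix_mult_add_rdistrib vector_scaleR_matrix_ac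
        ones_vector_matrix_mult_EpgradA)
  have h_Q: "mu_inner mu h (Q - J) = mu_inner mu h Q"
    using h_col by (simp add: J_def mu_inner_diff_right mu_inner_scaleR_outer_ones
        ones_vector_matrix_mult_eq_0_iff)
  have "mu_norm2 mu (Delta_A mu Q (A - \<eta> *\<^sub>R (EpgradA mu P Q V A + h)))
      = mu_norm2 mu (mu_residual mu ((A - J) - \<eta> *\<^sub>R ((mu_norm2 mu V - mu \<bullet> mu) *\<^sub>R (A - J)
          - (mu_inner mu V P - mu \<bullet> mu) *\<^sub>R (Q - J) + h)) (Q - J))"
  proof -
    have "A - \<eta> *\<^sub>R (EpgradA mu P Q V A + h) - J
        = (A - J) - \<eta> *\<^sub>R ((mu_norm2 mu V - mu \<bullet> mu) *\<^sub>R (A - J)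
            - (mu_inner mu V P - mu \<bullet> mu) *\<^sub>R (Q - J) + h)"
      unfolding E by simp
    then show ?thesis
      by (simp only: Delta_A_eq_mu_residual[OF mu_sum Q_col' A'_col] J_def)
  qed
  also have "\<dots> = (1 - \<eta> * (mu_norm2 mu V - mu \<bullet> mu))\<^sup>2 * mu_norm2 mu (mu_residual mu (A - J) (Q - J))
         - 2 * \<eta> * (1 - \<eta> * (mu_norm2 mu V - mu \<bullet> mu)) * mu_inner mu (mu_residual mu (A - J) (Q - J)) h
         - \<eta>\<^sup>2 / mu_norm2 mu (Q - J) * (mu_inner mu h (Q - J))\<^sup>2 + \<eta>\<^sup>2 * mu_norm2 mu h"
    using mu_pos by (simp add: less_imp_le mu_norm2_mu_residual_step)
  finally show ?thesis
    by (simp add: h_Q[unfolded J_def] J_def Delta_A_eq_mu_residual[OF mu_sum Q_col' A_col]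
        K_Q_eq_mu_norm2[OF mu_sum Q_col'])
qed

theorem lemmaC6:
  fixes mu :: "real^'n::finite"
    and P V :: "real^'n^'n"
    and Q A :: "real^'n^'t::finite"
    and eta_V eta_A :: real
    and B :: nat
    and smp :: "nat \<Rightarrow> ('n,'t) sample"
  assumes mu_pos: "\<forall>i. mu $ i > 0"
    and mu_sum: "(\<Sum>i\<in>UNIV. mu $ i) = 1"
    and P_nonneg: "\<forall>i j. P $ i $ j \<ge> 0"
    and P_col: "\<forall>j. (\<Sum>i\<in>UNIV. P $ i $ j) = 1"
    and P_mu: "P *v mu = mu"
    and Q_nonneg: "\<forall>t k. Q $ t $ k \<ge> 0"
    and Q_col: "\<forall>k. (\<Sum>t\<in>UNIV. Q $ t $ k) = 1"
    and KP_pos: "K_P mu P > 0"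
    and KQ_pos: "K_Q mu Q > 0"
    and V_col: "ones v* V = ones"
    and A_col: "ones v* A = ones"
    and V_mu: "V *v mu = mu"
    and B_pos: "B > 0"
  defines "hV \<equiv> BpgradV mu B smp V A - EpgradV mu P Q V A"
    and "hA \<equiv> BpgradA mu B smp V A - EpgradA mu P Q V A"
  defines "V' \<equiv> V - eta_V *\<^sub>R (EpgradV mu P Q V A + hV)"
    and "A' \<equiv> A - eta_A *\<^sub>R (EpgradA mu P Q V A + hA)"
  defines "aV \<equiv> alpha_V mu P V" and "aA \<equiv> alpha_A mu Q A"
    and "DV \<equiv> Delta_V mu P V" and "DA \<equiv> Delta_A mu Q A"
  defines "cA \<equiv> 1 - eta_A * K_P mu P * aV\<^sup>2 - eta_A * mu_norm2 mu DV"
    and "cV \<equiv> 1 - eta_V * (aA\<^sup>2 * K_Q mu Q + 1 / real CARD('t)) - eta_V * mu_norm2 mu DA"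
  shows "(mu_norm2 mu (Delta_A mu Q A') =
           cA\<^sup>2 * mu_norm2 mu DA - 2 * eta_A * cA * mu_inner mu DA hA
           - eta_A\<^sup>2 / K_Q mu Q * (mu_inner mu hA Q)\<^sup>2 + eta_A\<^sup>2 * mu_norm2 mu hA)
       \<and> (mu_norm2 mu (Delta_V mu P V') =
           cV\<^sup>2 * mu_norm2 mu DV - 2 * eta_V * cV * mu_inner mu DV hV
           - eta_V\<^sup>2 / K_P mu P * (mu_inner mu P hV)\<^sup>2 + eta_V\<^sup>2 * mu_norm2 mu hV)"
proof -
  have mu_mu: "mu \<bullet> mu \<noteq> 0"
    using mu_pos by (metis inner_eq_zero_iff less_irrefl zero_index)
  have Q_col': "ones v* Q = ones"
    using Q_col by (simp add: ones_vector_matrix_mult_eq_ones_iff)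
  have hV_mu: "hV *v mu = 0"
    by (simp add: hV_def matrix_vector_mult_diff_rdistrib EpgradV_mult_mu[OF mu_mu] BpgradV_mult_mu[OF mu_mu])
  have hA_col: "ones v* hA = 0"
    by (simp add: hA_def vector_matrix_mult_diff_rdistrib ones_vector_matrix_mult_EpgradA
        ones_vector_matrix_mult_BpgradA)
  have "cA = 1 - eta_A * (mu_norm2 mu V - mu \<bullet> mu)"
    by (simp add: cA_def aV_def DV_def mu_norm2_V_decomp[OF mu_pos mu_sum P_mu V_mu] algebra_simps)
  moreover have "cV = 1 - eta_V * mu_norm2 mu A"
    by (simp add: cV_def aA_def DA_def mu_norm2_A_decomp[OF mu_pos mu_sum Q_col' A_col] algebra_simps)
  ultimately show ?thesis
    unfolding A'_def V'_def DA_def DV_def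
    using mu_norm2_Delta_A_step[OF mu_pos mu_sum P_col P_mu Q_col A_col V_mu hA_col]
      mu_norm2_Delta_V_step[OF mu_pos mu_sum P_col P_mu Q_col A_col V_col V_mu hV_mu]
    by simp
qed

end
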